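(* Let $R$ be a ring with unity and involution $*$, and let $a,b,c\in R$. The following statements are equivalent. (1) $a$ is left dual $(b,c)$-core invertible. (2) $R=(cab)^*R\oplus r(b)$. (3) $R=(cab)^*R+r(b)$.
   Context: An element $a\in R$ is called left dual $(b,c)$-core invertible if there exists $x\in Rc$ such that $bxab=b$ and $(xab)^*=xab$. For $b\in R$, $r(b)=\{s\in R: bs=0\}$ is the right annihilator of $b$. *)

theory Defs
  imports Main
begin

definition involution :: "('a::ring_1 \<Rightarrow> 'a) \<Rightarrow> bool" where
  "involution s \<longleftrightarrow>
     (\<forall>x y. s (x + y) = s x + s y) \<and>
     (\<forall>x y. s (x * y) = s y * s x) \<and>
     (\<forall>x. s (s x) = x)"

definition rann :: "'a::ring_1 \<Rightarrow> 'a set" where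
  "rann b = {s. b * s = 0}"

definition right_ideal_gen :: "'a::ring_1 \<Rightarrow> 'a set" where
  "right_ideal_gen x = {x * r | r. True}"

definition left_ideal_gen :: "'a::ring_1 \<Rightarrow> 'a set" where
  "left_ideal_gen c = {r * c | r. True}"

definition sum_eq_univ :: "'a::ring_1 set \<Rightarrow> 'a set \<Rightarrow> bool" where
  "sum_eq_univ M N \<longleftrightarrow> (\<forall>z. \<exists>m\<in>M. \<exists>n\<in>N. z = m + n)"

definition direct_sum_eq_univ :: "'a::ring_1 set \<Rightarrow> 'a set \<Rightarrow> bool" where
  "direct_sum_eq_univ M N \<longleftrightarrow> sum_eq_univ M N \<and> M \<inter> N = {0}"

definition left_dual_core_invertible ::
  "('a::ring_1 \<Rightarrow> 'a) \<Rightarrow> 'a \<Rightarrow> 'a \<Rightarrow> 'a \<Rightarrow> bool" where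
  "left_dual_core_invertible s a b c \<longleftrightarrow>
     (\<exists>x \<in> left_ideal_gen c. b * x * a * b = b \<and> s (x * a * b) = x * a * b)"

end

theory Submission
  imports Defs
begin

text \<open>All three conditions say that \<open>b\<close> has a right inverse of the form \<open>(cab)\<^sup>* r\<close>.
  For (3) this is the decomposition \<open>1 = (cab)\<^sup>* r + n\<close>. For (1), the element \<open>xab\<close> with
  \<open>x = tc\<close> is hermitian and equals \<open>(cab)\<^sup>* t\<^sup>*\<close>; conversely, since \<open>r(b) \<subseteq> r(cab)\<close>, any
  \<open>e = (cab)\<^sup>* r\<close> with \<open>be = b\<close> satisfies \<open>(cab) e = cab\<close>, which forces \<open>e\<^sup>* = e\<^sup>* e\<close> and hence
  \<open>e\<^sup>* = e\<close>. The same identity makes the sum in (3) direct.\<close>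

lemma involution_add: "involution s \<Longrightarrow> s (x + y) = s x + s y"
  and involution_mult: "involution s \<Longrightarrow> s (x * y) = s y * s x"
  and involution_involutive: "involution s \<Longrightarrow> s (s x) = x"
  unfolding involution_def by blast+

lemma involution_zero: "involution s \<Longrightarrow> s 0 = 0"
  using involution_add[of s 0 0] by simp

lemma rann_subset_rann_mult_left: "rann b \<subseteq> rann (d * b)"
  unfolding rann_def by (auto simp: mult.assoc)

lemma right_inverse_transfer:
  fixes b y z :: "'a::ring_1"
  assumes "rann b \<subseteq> rann y" and "b * z = b"
  shows "y * z = y"
proof -
  have "b * (1 - z) = 0" using assms(2) by (simp add: right_diff_distrib)
  then have "y * (1 - z) = 0" using assms(1) unfolding rann_def by blast
  then show ?thesis by (simp add: right_diff_distrib)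
qed

lemma sum_eq_univ_right_ideal_gen_rann_iff:
  fixes x b :: "'a::ring_1"
  shows "sum_eq_univ (right_ideal_gen x) (rann b) \<longleftrightarrow> (\<exists>r. b * x * r = b)"
proof
  assume "sum_eq_univ (right_ideal_gen x) (rann b)"
  then obtain r n where "1 = x * r + n" and "b * n = 0"
    unfolding sum_eq_univ_def right_ideal_gen_def rann_def by blast
  then have "b * x * r = b" by (metis add_cancel_left_right distrib_left mult.assoc mult_1_right)
  then show "\<exists>r. b * x * r = b" ..
next
  assume "\<exists>r. b * x * r = b"
  then obtain r where r: "b * x * r = b" ..
  show "sum_eq_univ (right_ideal_gen x) (rann b)"
    unfolding sum_eq_univ_def
  proof
    fix z
    have "x * (r * z) \<in> right_ideal_gen x" unfolding right_ideal_gen_def by blast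
    moreover have "z - x * (r * z) \<in> rann b"
      using r unfolding rann_def by (simp add: right_diff_distrib mult.assoc[symmetric])
    ultimately show "\<exists>m\<in>right_ideal_gen x. \<exists>n\<in>rann b. z = m + n" by force
  qed
qed

lemma right_ideal_gen_inter_rann_eq_zero:
  fixes s :: "'a::ring_1 \<Rightarrow> 'a"
  assumes inv: "involution s" and "rann b \<subseteq> rann y" and "b * (s y * r) = b"
  shows "right_ideal_gen (s y) \<inter> rann b = {0}"
proof -
  have y: "y * (s y * r) = y" using assms(2,3) by (rule right_inverse_transfer)
  have "m = 0" if m_ideal: "m \<in> right_ideal_gen (s y)" and m_rann: "m \<in> rann b" for m
  proof -
    obtain w where w: "m = s y * w" using m_ideal unfolding right_ideal_gen_def by blast
    have ym: "y * m = 0" using m_rann assms(2) unfolding rann_def by blast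
    have "s m = s w * (y * (s y * r))"
      using w y by (simp add: involution_mult[OF inv] involution_involutive[OF inv])
    also have "\<dots> = s (y * m) * r"
      using w by (simp add: involution_mult[OF inv] involution_involutive[OF inv] mult.assoc)
    also have "\<dots> = 0" using ym by (simp add: involution_zero[OF inv])
    finally show "m = 0" using involution_involutive[OF inv, of m] by (simp add: involution_zero[OF inv])
  qed
  moreover have "0 \<in> right_ideal_gen (s y)" "0 \<in> rann b"
    unfolding right_ideal_gen_def rann_def by (auto intro: exI[of _ 0])
  ultimately show ?thesis by blast
qed

lemma hermitian_right_inverse:
  fixes s :: "'a::ring_1 \<Rightarrow> 'a"
  assumes inv: "involution s" and "rann b \<subseteq> rann y" and "b * (s y * r) = b"
  shows "s (s y * r) = s y * r"
proof -
  define e where "e = s y * r"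
  have y: "y * e = y" unfolding e_def using assms(2,3) by (rule right_inverse_transfer)
  have "s e = s r * y"
    unfolding e_def by (simp add: involution_mult[OF inv] involution_involutive[OF inv])
  then have se_absorbs_e: "s e = s e * e" using y by (simp add: mult.assoc)
  have "e = s (s e)" by (simp add: involution_involutive[OF inv])
  also have "\<dots> = s (s e * e)" using se_absorbs_e by simp
  also have "\<dots> = s e * e" by (simp add: involution_mult[OF inv] involution_involutive[OF inv])
  finally have "e = s e * e" .
  with se_absorbs_e have "s e = e" by simp
  then show ?thesis unfolding e_def .
qed

lemma left_dual_core_invertible_iff_right_inverse:
  fixes s :: "'a::ring_1 \<Rightarrow> 'a"
  assumes inv: "involution s"
  shows "left_dual_core_invertible s a b c \<longleftrightarrow> (\<exists>r. b * s (c * a * b) * r = b)"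
proof
  assume "left_dual_core_invertible s a b c"
  then obtain t where bx: "b * (t * c) * a * b = b" and h: "s (t * c * a * b) = t * c * a * b"
    unfolding left_dual_core_invertible_def left_ideal_gen_def by blast
  have "t * c * a * b = s (c * a * b) * s t"
    using h by (metis involution_mult[OF inv] mult.assoc)
  then have "b * s (c * a * b) * s t = b" using bx by (simp add: mult.assoc)
  then show "\<exists>r. b * s (c * a * b) * r = b" ..
next
  assume "\<exists>r. b * s (c * a * b) * r = b"
  then obtain r where r: "b * (s (c * a * b) * r) = b" by (auto simp: mult.assoc)
  have herm: "s (s (c * a * b) * r) = s (c * a * b) * r"
    using inv rann_subset_rann_mult_left r by (rule hermitian_right_inverse)
  have xab: "s r * c * a * b = s (c * a * b) * r"
    using herm by (simp add: involution_mult[OF inv] involution_involutive[OF inv] mult.assoc)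
  have "s r * c \<in> left_ideal_gen c" unfolding left_ideal_gen_def by blast
  with xab herm r show "left_dual_core_invertible s a b c"
    unfolding left_dual_core_invertible_def by (metis mult.assoc)
qed

theorem theorem2p8:
  fixes s :: "'a::ring_1 \<Rightarrow> 'a" and a b c :: 'a
  assumes "involution s"
  shows "(left_dual_core_invertible s a b c
            \<longleftrightarrow> direct_sum_eq_univ (right_ideal_gen (s (c * a * b))) (rann b))
       \<and> (direct_sum_eq_univ (right_ideal_gen (s (c * a * b))) (rann b)
            \<longleftrightarrow> sum_eq_univ (right_ideal_gen (s (c * a * b))) (rann b))"
proof -
  let ?M = "right_ideal_gen (s (c * a * b))"
  have sum_iff: "sum_eq_univ ?M (rann b) \<longleftrightarrow> (\<exists>r. b * s (c * a * b) * r = b)"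
    by (rule sum_eq_univ_right_ideal_gen_rann_iff)
  have "?M \<inter> rann b = {0}" if "b * s (c * a * b) * r = b" for r
    using assms rann_subset_rann_mult_left
  proof (rule right_ideal_gen_inter_rann_eq_zero)
    show "b * (s (c * a * b) * r) = b" using that by (simp only: mult.assoc)
  qed
  then have "direct_sum_eq_univ ?M (rann b) \<longleftrightarrow> sum_eq_univ ?M (rann b)"
    unfolding direct_sum_eq_univ_def sum_iff by blast
  with sum_iff left_dual_core_invertible_iff_right_inverse[OF assms] show ?thesis by blast
qed

end
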